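(* For every tree $T=(V,E)$ of order at least $3$, $$\sum_{uv\in E}|d(u)-d(v)| \;\ge\; \sum_{v\in V}(d(v)-2)^2 + 2(\Delta(T)-2).$$
   Context: $d(v)$ denotes the degree of a vertex $v$ in $T$, and $\Delta(T)$ is the maximum degree of $T$. *)

theory Defs
  imports Main
begin

definition simple_graph :: "'a set \<Rightarrow> 'a set set \<Rightarrow> bool" where
  "simple_graph V E \<longleftrightarrow> finite V \<and> (\<forall>e\<in>E. e \<subseteq> V \<and> card e = 2)"

definition is_walk :: "'a set \<Rightarrow> 'a set set \<Rightarrow> 'a list \<Rightarrow> bool" where
  "is_walk V E p \<longleftrightarrow> p \<noteq> [] \<and> set p \<subseteq> V \<and>
     (\<forall>i. Suc i < length p \<longrightarrow> {p ! i, p ! Suc i} \<in> E)"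

definition connected_graph :: "'a set \<Rightarrow> 'a set set \<Rightarrow> bool" where
  "connected_graph V E \<longleftrightarrow>
     (\<forall>u\<in>V. \<forall>v\<in>V. \<exists>p. is_walk V E p \<and> hd p = u \<and> last p = v)"

definition is_cycle :: "'a set \<Rightarrow> 'a set set \<Rightarrow> 'a list \<Rightarrow> bool" where
  "is_cycle V E c \<longleftrightarrow> length c \<ge> 3 \<and> distinct c \<and> is_walk V E c \<and> {last c, hd c} \<in> E"

definition acyclic_graph :: "'a set \<Rightarrow> 'a set set \<Rightarrow> bool" where
  "acyclic_graph V E \<longleftrightarrow> \<not> (\<exists>c. is_cycle V E c)"

definition is_tree :: "'a set \<Rightarrow> 'a set set \<Rightarrow> bool" where
  "is_tree V E \<longleftrightarrow> simple_graph V E \<and> V \<noteq> {} \<and> connected_graph V E \<and> acyclic_graph V E"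

definition degree :: "'a set set \<Rightarrow> 'a \<Rightarrow> nat" where
  "degree E v = card {e\<in>E. v \<in> e}"

definition max_degree :: "'a set \<Rightarrow> 'a set set \<Rightarrow> nat" where
  "max_degree V E = Max (degree E ` V)"

end

theory Submission
  imports Defs
begin

text \<open>
  For an edge \<open>uv\<close> and either endpoint \<open>x\<close> of it, \<open>|d(u) - d(v)| \<ge> d(u) + d(v) - 2 d(x)\<close>.
  The edges of a forest can be assigned injectively to endpoints different from any prescribed
  vertex \<open>w\<close> (prune a leaf other than \<open>w\<close> and recurse). Taking \<open>w\<close> of maximum degree and summing
  over the edges, the handshake identities \<open>\<Sum>\<^sub>e (d(u) + d(v)) = \<Sum>\<^sub>v d(v)\<^sup>2\<close> and
  \<open>\<Sum>\<^sub>v d(v) = 2|E|\<close> give \<open>\<Sum>\<^sub>e |d(u) - d(v)| \<ge> \<Sum>\<^sub>v d(v)\<^sup>2 - 4|E| + 2\<Delta>\<close>, and \<open>|V| \<le> |E| + 1\<close>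
  (connectedness) turns this into the claim.
\<close>

lemma simple_graph_finite_edges: "simple_graph V E \<Longrightarrow> finite E"
  unfolding simple_graph_def by (meson Pow_iff finite_Pow_iff rev_finite_subset subsetI)

lemma simple_graph_edgeE:
  assumes "simple_graph V E" "e \<in> E"
  obtains a b where "e = {a, b}" "a \<noteq> b" "a \<in> V" "b \<in> V"
  using assms unfolding simple_graph_def by (metis card_2_iff insert_subset)

lemma sum_degree_mult:
  fixes h :: "'a \<Rightarrow> 'b::comm_semiring_1"
  assumes "simple_graph V E"
  shows "(\<Sum>v\<in>V. of_nat (degree E v) * h v) = (\<Sum>e\<in>E. \<Sum>v\<in>e. h v)"
proof -
  have fV: "finite V" and sub: "\<And>e. e \<in> E \<Longrightarrow> e \<subseteq> V"
    using assms unfolding simple_graph_def by blast+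
  have fE: "finite E" using assms by (rule simple_graph_finite_edges)
  have "(\<Sum>v\<in>V. of_nat (degree E v) * h v) = (\<Sum>v\<in>V. \<Sum>e\<in>E. if v \<in> e then h v else 0)"
    unfolding degree_def using fE by (simp add: sum.If_cases Int_def)
  also have "\<dots> = (\<Sum>e\<in>E. \<Sum>v\<in>V. if v \<in> e then h v else 0)"
    by (rule sum.swap)
  also have "\<dots> = (\<Sum>e\<in>E. \<Sum>v\<in>e. h v)"
  proof (rule sum.cong)
    fix e assume "e \<in> E"
    then have "{v \<in> V. v \<in> e} = e" using sub by blast
    then show "(\<Sum>v\<in>V. if v \<in> e then h v else 0) = (\<Sum>v\<in>e. h v)"
      by (simp add: sum.inter_filter[OF fV, symmetric])
  qed simp
  finally show ?thesis .
qed

lemma sum_degree: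
  assumes "simple_graph V E"
  shows "(\<Sum>v\<in>V. degree E v) = 2 * card E"
proof -
  have "(\<Sum>v\<in>V. of_nat (degree E v) * 1) = (\<Sum>e\<in>E. \<Sum>v\<in>e. 1 :: nat)"
    using assms by (rule sum_degree_mult)
  also have "\<dots> = (\<Sum>e\<in>E. 2)"
    using assms unfolding simple_graph_def by (intro sum.cong) auto
  finally show ?thesis by simp
qed

lemma is_walk_mono: "is_walk V E p \<Longrightarrow> E \<subseteq> E' \<Longrightarrow> is_walk V E' p"
  unfolding is_walk_def by blast

lemma is_walk_tl:
  assumes "is_walk V E p" "length p \<ge> 2"
  shows "is_walk V E (tl p)"
  using assms unfolding is_walk_def
  by (cases p) (auto simp: nth_tl)

lemma is_walk_Cons:
  assumes "is_walk V E p" "y \<in> V" "{y, hd p} \<in> E"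
  shows "is_walk V E (y # p)"
  using assms unfolding is_walk_def
  by (auto simp: nth_Cons hd_conv_nth split: nat.split)

lemma is_walk_take:
  assumes "is_walk V E p" "k > 0"
  shows "is_walk V E (take k p)"
  using assms unfolding is_walk_def
  by (auto dest: in_set_takeD)

lemma is_walk_rev:
  assumes "is_walk V E p"
  shows "is_walk V E (rev p)"
proof -
  have "{rev p ! i, rev p ! Suc i} \<in> E" if "Suc i < length p" for i
  proof -
    define k where "k = length p - Suc (Suc i)"
    have "Suc k < length p" using that unfolding k_def by simp
    then have "{p ! k, p ! Suc k} \<in> E" using assms unfolding is_walk_def by blast
    moreover have "rev p ! i = p ! Suc k" "rev p ! Suc i = p ! k"
      using that unfolding k_def by (simp_all add: rev_nth Suc_diff_Suc)
    ultimately show ?thesis by (simp add: insert_commute)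
  qed
  then show ?thesis using assms unfolding is_walk_def by auto
qed

lemma connected_card_vertices_le:
  assumes sg: "simple_graph V E" and con: "connected_graph V E" and "V \<noteq> {}"
  shows "card V \<le> card E + 1"
proof -
  obtain w where wV: "w \<in> V" using \<open>V \<noteq> {}\<close> by blast
  define dist where
    "dist v = (LEAST k. \<exists>p. is_walk V E p \<and> hd p = v \<and> last p = w \<and> length p = Suc k)" for v
  have toward_w: "\<exists>u. {v, u} \<in> E \<and> dist u < dist v" if v: "v \<in> V - {w}" for v
  proof -
    obtain p0 where "is_walk V E p0" "hd p0 = v" "last p0 = w"
      using con wV v unfolding connected_graph_def by blast
    then have "\<exists>p. is_walk V E p \<and> hd p = v \<and> last p = w \<and> length p = Suc (length p0 - 1)"
      unfolding is_walk_def by auto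
    then have "\<exists>p. is_walk V E p \<and> hd p = v \<and> last p = w \<and> length p = Suc (dist v)"
      unfolding dist_def by (rule LeastI)
    then obtain p where p: "is_walk V E p" "hd p = v" "last p = w" "length p = Suc (dist v)"
      by blast
    obtain u q where p_split: "p = v # u # q"
      using p v by (cases p rule: remdups_adj.cases) auto
    have "{v, u} \<in> E"
      using p(1,2) unfolding p_split is_walk_def by fastforce
    moreover have "dist u \<le> length q"
      unfolding dist_def[of u] using is_walk_tl[OF p(1)] p(3)
      by (intro Least_le exI[of _ "u # q"]) (simp add: p_split)
    ultimately show ?thesis
      using p(4) p_split by (intro exI[of _ u]) simp
  qed
  then obtain nxt where nxt: "\<And>v. v \<in> V - {w} \<Longrightarrow> {v, nxt v} \<in> E \<and> dist (nxt v) < dist v"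
    by metis
  have "inj_on (\<lambda>v. {v, nxt v}) (V - {w})"
  proof (rule inj_onI)
    fix x y assume x: "x \<in> V - {w}" and y: "y \<in> V - {w}" and "{x, nxt x} = {y, nxt y}"
    then have "x = y \<or> (x = nxt y \<and> y = nxt x)" by (auto simp: doubleton_eq_iff)
    then show "x = y" using nxt[OF x] nxt[OF y] by auto
  qed
  moreover have "(\<lambda>v. {v, nxt v}) ` (V - {w}) \<subseteq> E" using nxt by blast
  ultimately have "card (V - {w}) \<le> card E"
    using simple_graph_finite_edges[OF sg] by (rule card_inj_on_le)
  then show ?thesis using wV by simp
qed

lemma acyclic_graph_subset: "acyclic_graph V E \<Longrightarrow> E' \<subseteq> E \<Longrightarrow> acyclic_graph V E'"
  unfolding acyclic_graph_def is_cycle_def using is_walk_mono by blast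

lemma longest_path_hd_edge:
  assumes sg: "simple_graph V E" and ac: "acyclic_graph V E"
    and p: "is_walk V E p" "distinct p" "length p \<ge> 2"
    and longest: "\<And>q. is_walk V E q \<Longrightarrow> distinct q \<Longrightarrow> length q \<le> length p"
    and e: "e \<in> E" "hd p \<in> e"
  shows "e = {p ! 0, p ! 1}"
proof -
  have hd_p: "hd p = p ! 0" using p(3) by (cases p) auto
  obtain y where ey: "e = {hd p, y}" "y \<noteq> hd p" "y \<in> V"
  proof -
    obtain a b where "e = {a, b}" "a \<noteq> b" "a \<in> V" "b \<in> V"
      using sg e(1) by (rule simple_graph_edgeE)
    with e(2) show thesis using that by (auto simp: insert_commute)
  qed
  have "y \<in> set p"
  proof (rule ccontr)
    assume "y \<notin> set p"
    then have "is_walk V E (y # p)" "distinct (y # p)"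
      using is_walk_Cons[OF p(1) ey(3)] e(1) ey(1) p(2) by (auto simp: insert_commute)
    then show False using longest by fastforce
  qed
  then obtain j where j: "j < length p" "y = p ! j" by (metis in_set_conv_nth)
  have "j \<noteq> 0" using ey(2) j hd_p by (metis)
  moreover have "is_cycle V E (take (Suc j) p)" if "j \<ge> 2"
  proof -
    have "last (take (Suc j) p) = y" "hd (take (Suc j) p) = hd p"
      using j by (simp add: take_Suc_conv_app_nth, simp add: hd_take)
    then show ?thesis
      unfolding is_cycle_def using is_walk_take[OF p(1)] p(2) j(1) e(1) ey(1) that
      by (simp add: insert_commute)
  qed
  ultimately have "j = 1" using ac unfolding acyclic_graph_def by fastforce
  then show ?thesis using ey(1) j(2) hd_p by simp
qed

lemma acyclic_graph_leaf:
  assumes sg: "simple_graph V E" and ac: "acyclic_graph V E" and "E \<noteq> {}"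
  obtains l e0 where "l \<in> e0" "e0 \<in> E" "l \<noteq> w" "\<And>e. e \<in> E \<Longrightarrow> l \<in> e \<Longrightarrow> e = e0"
proof -
  define path where "path q \<longleftrightarrow> is_walk V E q \<and> distinct q" for q
  obtain e a b where "e \<in> E" "e = {a, b}" "a \<noteq> b" "a \<in> V" "b \<in> V"
    using \<open>E \<noteq> {}\<close> simple_graph_edgeE[OF sg] by (metis ex_in_conv)
  then have "path [a, b]"
    unfolding path_def is_walk_def by (auto simp: less_Suc_eq)
  moreover have "length q < Suc (card V)" if "path q" for q
    using that sg unfolding path_def is_walk_def simple_graph_def
    by (metis card_mono distinct_card le_imp_less_Suc)
  ultimately obtain p where p: "path p" and longest: "\<And>q. path q \<Longrightarrow> length q \<le> length p"
    using ex_has_greatest_nat[of path "[a, b]" length] by blast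
  have "length p \<ge> 2" using longest[OF \<open>path [a, b]\<close>] by simp
  \<comment> \<open>the two ends of a longest path are distinct leaves, so one of them differs from \<open>w\<close>\<close>
  obtain q where q: "q = p \<or> q = rev p" "hd q \<noteq> w"
  proof -
    have "hd p \<noteq> hd (rev p)"
      using p \<open>length p \<ge> 2\<close> unfolding path_def
      by (cases p rule: rev_cases) (auto simp: hd_append split: if_splits)
    then show thesis using that by metis
  qed
  have "path q" "length q = length p"
    using q(1) p is_walk_rev unfolding path_def by auto
  then have q_walk: "is_walk V E q" "distinct q" "length q \<ge> 2"
    using \<open>length p \<ge> 2\<close> unfolding path_def by auto
  show thesis
  proof
    show "hd q \<in> {q ! 0, q ! 1}" using q_walk(3) by (cases q) auto
    show "{q ! 0, q ! 1} \<in> E" using q_walk unfolding is_walk_def by auto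
    show "hd q \<noteq> w" by (fact q(2))
    show "e = {q ! 0, q ! 1}" if "e \<in> E" "hd q \<in> e" for e
      using longest_path_hd_edge[OF sg ac q_walk _ that] longest \<open>length q = length p\<close>
      unfolding path_def by metis
  qed
qed

lemma acyclic_graph_inj_endpoint:
  assumes "simple_graph V E" and "acyclic_graph V E"
  shows "\<exists>f. inj_on f E \<and> (\<forall>e\<in>E. f e \<in> e \<and> f e \<noteq> w)"
  using assms
proof (induction "card E" arbitrary: E)
  case 0
  then have "E = {}" using simple_graph_finite_edges[of V E] by simp
  then show ?case by simp
next
  case (Suc m)
  then have "E \<noteq> {}" by auto
  then obtain l e0 where
    leaf: "l \<in> e0" "e0 \<in> E" "l \<noteq> w" "\<And>e. e \<in> E \<Longrightarrow> l \<in> e \<Longrightarrow> e = e0"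
    using acyclic_graph_leaf[of V E w] Suc.prems by blast
  define E' where "E' = E - {e0}"
  have "m = card E'"
    using Suc.hyps(2) leaf(2) simple_graph_finite_edges[OF Suc.prems(1)] unfolding E'_def by simp
  moreover have "simple_graph V E'"
    using Suc.prems(1) unfolding E'_def simple_graph_def by blast
  moreover have "acyclic_graph V E'"
    using Suc.prems(2) unfolding E'_def by (rule acyclic_graph_subset) blast
  ultimately obtain f where f: "inj_on f E'" "\<forall>e\<in>E'. f e \<in> e \<and> f e \<noteq> w"
    using Suc.hyps(1) by blast
  have "l \<notin> f ` E'"
    using f(2) leaf(4) unfolding E'_def by blast
  then have "inj_on (f(e0 := l)) E"
    using f(1) leaf(2) unfolding E'_def by (auto simp: inj_on_def)
  moreover have "\<forall>e\<in>E. (f(e0 := l)) e \<in> e \<and> (f(e0 := l)) e \<noteq> w"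
    using f(2) leaf(1,3) unfolding E'_def by auto
  ultimately show ?case by blast
qed

lemma sum_doubleton_le_abs_diff:
  fixes d :: "'a \<Rightarrow> int"
  assumes "a \<noteq> b" "x \<in> {a, b}"
  shows "2 * (\<Sum>v\<in>{a, b}. d v) \<le> (\<Sum>u\<in>{a, b}. \<Sum>v\<in>{a, b}. \<bar>d u - d v\<bar>) + 4 * d x"
  using assms by (auto simp: abs_if)

lemma sum_edge_abs_diff_degree_ge:
  assumes sg: "simple_graph V E" and "w \<in> V"
    and f: "inj_on f E" "\<forall>e\<in>E. f e \<in> e \<and> f e \<noteq> w"
  shows "2 * ((\<Sum>v\<in>V. int (degree E v) ^ 2) - 4 * int (card E) + 2 * int (degree E w))
    \<le> (\<Sum>e\<in>E. \<Sum>u\<in>e. \<Sum>v\<in>e. \<bar>int (degree E u) - int (degree E v)\<bar>)"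
proof -
  define d where "d v = int (degree E v)" for v
  have fV: "finite V" and edges_sub: "\<And>e. e \<in> E \<Longrightarrow> e \<subseteq> V"
    using sg unfolding simple_graph_def by blast+
  have per_edge: "2 * (\<Sum>v\<in>e. d v) \<le> (\<Sum>u\<in>e. \<Sum>v\<in>e. \<bar>d u - d v\<bar>) + 4 * d (f e)" if "e \<in> E" for e
    using simple_graph_edgeE[OF sg that] f(2) that by (metis sum_doubleton_le_abs_diff)
  have "(\<Sum>e\<in>E. d (f e)) = (\<Sum>v\<in>f ` E. d v)"
    using f(1) by (simp add: sum.reindex)
  also have "\<dots> \<le> (\<Sum>v\<in>V - {w}. d v)"
    using f(2) edges_sub fV by (intro sum_mono2) (auto simp: d_def)
  also have "\<dots> = (\<Sum>v\<in>V. d v) - d w"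
    using fV \<open>w \<in> V\<close> by (simp add: sum_diff1)
  also have "\<dots> = 2 * int (card E) - d w"
    using sum_degree[OF sg] unfolding d_def by (simp flip: of_nat_sum)
  finally have endpoints: "(\<Sum>e\<in>E. d (f e)) \<le> 2 * int (card E) - d w" .
  have "2 * (\<Sum>v\<in>V. d v ^ 2) = (\<Sum>e\<in>E. 2 * (\<Sum>v\<in>e. d v))"
    using sum_degree_mult[OF sg, of d] by (simp add: d_def power2_eq_square sum_distrib_left)
  also have "\<dots> \<le> (\<Sum>e\<in>E. (\<Sum>u\<in>e. \<Sum>v\<in>e. \<bar>d u - d v\<bar>) + 4 * d (f e))"
    using per_edge by (rule sum_mono)
  also have "\<dots> = (\<Sum>e\<in>E. \<Sum>u\<in>e. \<Sum>v\<in>e. \<bar>d u - d v\<bar>) + 4 * (\<Sum>e\<in>E. d (f e))"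
    by (simp add: sum.distrib sum_distrib_left)
  finally show ?thesis
    using endpoints unfolding d_def ring_distribs by linarith
qed

theorem theorem4:
  fixes V :: "'a set" and E :: "'a set set"
  assumes "is_tree V E" and "card V \<ge> 3"
  shows "(\<Sum>e\<in>E. \<Sum>u\<in>e. \<Sum>v\<in>e. \<bar>int (degree E u) - int (degree E v)\<bar>)
         \<ge> 2 * ((\<Sum>v\<in>V. (int (degree E v) - 2)^2) + 2 * (int (max_degree V E) - 2))"
proof -
  have sg: "simple_graph V E" and "V \<noteq> {}" "connected_graph V E" "acyclic_graph V E"
    using assms(1) unfolding is_tree_def by auto
  have fV: "finite V" using sg unfolding simple_graph_def by blast
  have "max_degree V E \<in> degree E ` V"
    unfolding max_degree_def using fV \<open>V \<noteq> {}\<close> by (intro Max_in) auto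
  then obtain w where "w \<in> V" and w_max: "degree E w = max_degree V E"
    by auto
  obtain f where "inj_on f E" "\<forall>e\<in>E. f e \<in> e \<and> f e \<noteq> w"
    using acyclic_graph_inj_endpoint[OF sg \<open>acyclic_graph V E\<close>] by blast
  then have "2 * ((\<Sum>v\<in>V. int (degree E v) ^ 2) - 4 * int (card E) + 2 * int (max_degree V E))
    \<le> (\<Sum>e\<in>E. \<Sum>u\<in>e. \<Sum>v\<in>e. \<bar>int (degree E u) - int (degree E v)\<bar>)"
    using sum_edge_abs_diff_degree_ge[OF sg \<open>w \<in> V\<close>] w_max by simp
  moreover have "card V \<le> card E + 1"
    using connected_card_vertices_le[OF sg \<open>connected_graph V E\<close> \<open>V \<noteq> {}\<close>] .
  moreover have "(\<Sum>v\<in>V. (int (degree E v) - 2)^2)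
      = (\<Sum>v\<in>V. int (degree E v) ^ 2) - 8 * int (card E) + 4 * int (card V)"
    using sum_degree[OF sg]
    by (simp add: power2_diff sum.distrib sum_subtractf flip: sum_distrib_left of_nat_sum)
  ultimately show ?thesis unfolding ring_distribs by linarith
qed

end
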